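(* Let $q=2^m$ with $m\ge 4$ even. Let $\bar{\mathbb D}$ be the incidence structure with point set $U_{q+1}$ whose blocks are the sets $U_{q+1}\setminus B$ for $B\in \mathcal B_{q-4}(\mathrm{Tr}_{q^2/q}(\mathcal C_{\{3,5\}}))$. Then $\bar{\mathbb D}$ is isomorphic to the Witt spherical geometry design with parameters $3$-$(2^m+1,5,1)$, namely the design with point set $\mathrm{PG}(1,2^m)$ whose blocks are the images of the $5$-set $\mathrm{PG}(1,4)=\mathrm{GF}(4)\cup\{\infty\}$ under $\mathrm{PGL}_2(\mathrm{GF}(2^m))$.
   Context: $U_{q+1}$ is the set of $(q+1)$-th roots of unity in $\mathrm{GF}(q^2)$; coordinates are indexed by $U_{q+1}$. $\mathcal C_{\{3,5\}}=\{(a_3u^3+a_{q-2}u^{q-2}+a_5u^5+a_{q-4}u^{q-4})_{u\in U_{q+1}}: a_i\in\mathrm{GF}(q^2)\}$; $\mathrm{Tr}_{q^2/q}(\mathcal C)$ is obtained by applying $x\mapsto x+x^q$ coordinatewise. $\mathcal B_w(\mathcal C)$ is the set of supports of codewords of Hamming weight $w$. $\mathrm{GF}(4)\subseteq\mathrm{GF}(2^m)$ since $m$ is even, and $\mathrm{PGL}_2(\mathrm{GF}(2^m))$ acts on $\mathrm{PG}(1,2^m)=\mathrm{GF}(2^m)\cup\{\infty\}$ by linear fractional transformations. Two incidence structures are isomorphic if there is a bijection of point sets mapping the block set of one onto the block set of the other. *)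

theory Defs
  imports Main
begin

text \<open>The ambient field GF(q^2), q = 2^m, is modelled by an arbitrary finite field type
  'a of cardinality q^2 (unique up to isomorphism). GF(q) inside it is the set of x with x^q = x.\<close>

definition Uroots :: "nat \<Rightarrow> 'a::field set" where
  "Uroots q = {u. u ^ (q + 1) = 1}"

definition subfield_of :: "nat \<Rightarrow> 'a::field set" where
  "subfield_of k = {x. x ^ k = x}"

definition trace :: "nat \<Rightarrow> 'a::field \<Rightarrow> 'a" where
  "trace q x = x + x ^ q"

text \<open>Codewords of Tr(C_{3,5}), as functions evaluated at the coordinates u in U_{q+1}.\<close>
definition trace_code35 :: "nat \<Rightarrow> ('a::field \<Rightarrow> 'a) set" where
  "trace_code35 q = {c. \<exists>a3 aq2 a5 aq4. c = (\<lambda>u. trace q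
      (a3 * u ^ 3 + aq2 * u ^ (q - 2) + a5 * u ^ 5 + aq4 * u ^ (q - 4)))}"

definition supp_on :: "'a set \<Rightarrow> ('a \<Rightarrow> 'a::field) \<Rightarrow> 'a set" where
  "supp_on P c = {u \<in> P. c u \<noteq> 0}"

definition blocks_w :: "nat \<Rightarrow> nat \<Rightarrow> 'a::field set set" where
  "blocks_w q w = {supp_on (Uroots q) c | c. c \<in> trace_code35 q \<and> card (supp_on (Uroots q) c) = w}"

text \<open>Projective line PG(1,k) over the subfield GF(k): None is the point at infinity.\<close>
definition PG1 :: "nat \<Rightarrow> 'a::field option set" where
  "PG1 k = insert None (Some ` subfield_of k)"

definition pgl2 :: "nat \<Rightarrow> ('a::field \<times> 'a \<times> 'a \<times> 'a) set" where
  "pgl2 q = {(a, b, c, d). a \<in> subfield_of q \<and> b \<in> subfield_of q \<and> c \<in> subfield_of q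
      \<and> d \<in> subfield_of q \<and> a * d - b * c \<noteq> 0}"

fun moebius :: "'a::field \<times> 'a \<times> 'a \<times> 'a \<Rightarrow> 'a option \<Rightarrow> 'a option" where
  "moebius (a, b, c, d) None = (if c = 0 then None else Some (a / c))"
| "moebius (a, b, c, d) (Some z) =
     (if c * z + d = 0 then None else Some ((a * z + b) / (c * z + d)))"

definition witt_blocks :: "nat \<Rightarrow> 'a::field option set set" where
  "witt_blocks q = {moebius g ` PG1 4 | g. g \<in> pgl2 q}"

definition inc_isomorphic :: "'p set \<Rightarrow> 'p set set \<Rightarrow> 'r set \<Rightarrow> 'r set set \<Rightarrow> bool" where
  "inc_isomorphic P1 B1 P2 B2 = (\<exists>f. bij_betw f P1 P2 \<and> (\<lambda>B. f ` B) ` B1 = B2)"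

end

(*
  For u in U_{q+1} we have u^q = 1/u, so u^5 times the codeword of Tr(C_{3,5}) with
  coefficients a_3, a_{q-2}, a_5, a_{q-4} is the square of g u^5 + b u^4 + b^q u + g^q, where
  b^2 = a_3 + a_{q-2}^q and g^2 = a_5 + a_{q-4}^q.  The complements of the supports of weight
  q - 4 are therefore the 5-element zero sets of these polynomials on U_{q+1}.

  Fix \<omega> in GF(q^2) outside GF(q).  The Moebius map u |-> (\<omega>^q u + \<omega>) / (u + 1) sends U_{q+1}
  bijectively onto PG(1,q) and carries those zero sets onto the 5-element zero sets in PG(1,q)
  of the forms A x^5 + B x^4 y + C x y^4 + D y^5 with coefficients in GF(q).  In characteristic 2
  this family of forms is stable under linear substitution, so PGL_2(q), which is 3-transitive,
  acts on the zero sets.  Moving three zeros to infinity, 0 and 1 forces a form with five zeros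
  to be a multiple of x^4 y + x y^4, whose zero set is PG(1,4).  Hence the 5-element zero sets
  are exactly the blocks of the Witt design.
*)

theory Submission
  imports Defs "HOL-Algebra.Algebraic_Closure_Type"
begin

section \<open>Finite fields\<close>

lemma ring_of_type_algebra_pow:
  "x [^]\<^bsub>ring_of_type_algebra\<^esub> n = (x :: 'a :: comm_ring_1) ^ n"
  by (induction n) (simp_all add: ring_of_type_algebra_def mult.commute)

lemma power_card_eq_same:
  fixes x :: "'a :: {field,finite}"
  shows "x ^ card (UNIV :: 'a set) = x"
proof (cases "x = 0")
  case False
  \<comment> \<open>The library version of this lemma needs the sort \<open>finite_field\<close>; we go through
    the unit group of the HOL-Algebra field structure of the type instead.\<close>
  interpret field "ring_of_type_algebra :: 'a ring" by blast
  have "Units (ring_of_type_algebra :: 'a ring) = UNIV - {0}"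
    by (simp add: field_Units) (simp add: ring_of_type_algebra_def)
  with False have "x ^ card (UNIV - {0 :: 'a}) = 1"
    using units_power_order_eq_one[of x]
    by (simp add: ring_of_type_algebra_pow) (simp add: ring_of_type_algebra_def)
  moreover have "card (UNIV :: 'a set) = Suc (card (UNIV - {0 :: 'a}))"
    using finite_UNIV_card_ge_0[where 'a = 'a] by (simp add: card_Suc_Diff1)
  ultimately show ?thesis
    by (metis power_Suc mult_1_right)
qed (simp add: finite_UNIV_card_ge_0)

lemma CHAR_eq_2_if_card_power_2:
  assumes "card (UNIV :: 'a :: {field,finite} set) = 2 ^ k" and "k \<ge> 1"
  shows "CHAR('a) = 2"
proof -
  have "(-1 :: 'a) = (-1) ^ card (UNIV :: 'a set)"
    by (rule power_card_eq_same[symmetric])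
  also have "\<dots> = 1"
    unfolding assms(1) using assms(2) by (intro neg_one_even_power) simp
  finally have "of_nat 2 = (0 :: 'a)"
    by (simp add: eq_neg_iff_add_eq_0 minus_equation_iff)
  then have "CHAR('a) dvd 2"
    by (simp only: of_nat_eq_0_iff_char_dvd)
  then show ?thesis
    using CHAR_not_1[where 'a = 'a] dvd_imp_le[of "CHAR('a)" 2] by (cases "CHAR('a)") auto
qed

lemma add_self_CHAR_2:
  assumes "CHAR('a :: ring_1) = 2"
  shows "x + x = (0 :: 'a)"
  by (metis minus_CHAR_2[OF assms] diff_self)

lemma power_2_add_CHAR_2:
  assumes "CHAR('a :: comm_semiring_1) = 2"
  shows "(x + y) ^ 2 = x ^ 2 + (y :: 'a) ^ 2"
proof -
  have "prime CHAR('a)"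
    unfolding assms by (rule two_is_prime_nat)
  from freshmans_dream[OF this assms[symmetric]] show ?thesis .
qed

lemma exists_square_root_CHAR_2:
  fixes x :: "'a :: {field,finite}"
  assumes "CHAR('a) = 2"
  shows "\<exists>y. y ^ 2 = x"
proof -
  have "inj (\<lambda>y :: 'a. y ^ 2)"
  proof (rule injI)
    fix y z :: 'a
    assume "y ^ 2 = z ^ 2"
    have "(y + z) ^ 2 = y ^ 2 + z ^ 2"
      by (rule power_2_add_CHAR_2[OF assms])
    also have "\<dots> = 0"
      using \<open>y ^ 2 = z ^ 2\<close> add_self_CHAR_2[OF assms] by simp
    finally have "y = - z"
      by (simp add: add_eq_0_iff2)
    then show "y = z"
      using uminus_CHAR_2[OF assms] by simp
  qed
  then have "surj (\<lambda>y :: 'a. y ^ 2)"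
    by (rule finite_UNIV_inj_surj[OF finite_UNIV])
  from surjD[OF this, of x] show ?thesis
    by auto
qed

lemma card_fixed_points_power_le:
  assumes "n \<ge> 2"
  shows "card {x :: 'a :: field. x ^ n = x} \<le> n"
proof -
  define p where "p = monom (1 :: 'a) n + [:0, -1:]"
  have deg: "degree p = n"
    using assms unfolding p_def by (subst degree_add_eq_left) (auto simp: degree_monom_eq)
  then have "p \<noteq> 0" using assms by auto
  moreover have "{x. poly p x = 0} = {x. x ^ n = x}"
    by (simp add: p_def poly_monom)
  ultimately show ?thesis
    using card_poly_roots_bound deg by metis
qed

lemma card_sum_power_powers_eq_le:
  fixes c :: "'a :: field"
  assumes "k \<ge> 2" and "d \<ge> 1"
  shows "card {x. (\<Sum>i<d. x ^ k ^ i) = c} \<le> k ^ (d - 1)"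
proof -
  define p where "p = (\<Sum>i<d. monom (1 :: 'a) (k ^ i)) - [:c:]"
  have deg: "degree p \<le> k ^ (d - 1)"
    unfolding p_def using assms
    by (intro degree_diff_le degree_sum_le order.trans[OF degree_monom_le]) auto
  have "coeff p (k ^ (d - 1)) = 1"
  proof -
    have "coeff [:c:] (k ^ (d - 1)) = 0"
      using assms by (cases "k ^ (d - 1)") simp_all
    moreover have "coeff (\<Sum>i<d. monom (1 :: 'a) (k ^ i)) (k ^ (d - 1)) = 1"
      using assms by (simp add: coeff_sum)
    ultimately show ?thesis
      by (simp add: p_def)
  qed
  then have "p \<noteq> 0"
    by auto
  have "{x. (\<Sum>i<d. x ^ k ^ i) = c} = {x. poly p x = 0}"
    by (simp add: p_def poly_sum poly_monom)
  also have "card \<dots> \<le> degree p"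
    using \<open>p \<noteq> 0\<close> by (rule card_poly_roots_bound)
  finally show ?thesis
    using deg by (rule order.trans)
qed

lemma sum_power_powers_in_subfield_of:
  fixes x :: "'a :: {field,finite}"
  assumes card: "card (UNIV :: 'a set) = k ^ d"
    and prime: "prime CHAR('a)" and k: "k = CHAR('a) ^ j"
  shows "(\<Sum>i<d. x ^ k ^ i) \<in> subfield_of k"
proof -
  have "(\<Sum>i<d. x ^ k ^ i) ^ k = (\<Sum>i<d. x ^ k ^ Suc i)"
    by (simp add: freshmans_dream_sum'[OF prime k] power_mult[symmetric] mult.commute)
  also have "\<dots> = (\<Sum>i<d. x ^ k ^ i)"
  proof -
    have "x ^ k ^ d = x"
      using power_card_eq_same[of x] card by simp
    then show ?thesis
      using sum.lessThan_Suc_shift[of "\<lambda>i. x ^ k ^ i" d] by simp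
  qed
  finally show ?thesis
    by (simp add: subfield_of_def)
qed

lemma card_subfield_of:
  assumes card: "card (UNIV :: 'a :: {field,finite} set) = k ^ d"
    and k: "k = CHAR('a) ^ j" and "j \<ge> 1" and "d \<ge> 1"
  shows "card (subfield_of k :: 'a set) = k"
proof -
  have prime: "prime CHAR('a)"
    by (intro prime_CHAR_semidom finite_imp_CHAR_pos finite_UNIV)
  have "k \<ge> 2"
    unfolding k using prime_ge_2_nat[OF prime] self_le_power[of "CHAR('a)" j] \<open>j \<ge> 1\<close>
    by linarith
  \<comment> \<open>The trace to \<open>GF(k)\<close> maps onto \<open>subfield_of k\<close> with fibres of size at
    most \<open>k ^ (d - 1)\<close>, which forces \<open>card (subfield_of k) \<ge> k\<close>.\<close>
  define T where "T x = (\<Sum>i<d. x ^ k ^ i)" for x :: 'a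
  have T_in: "T x \<in> subfield_of k" for x
    unfolding T_def using card prime k by (rule sum_power_powers_in_subfield_of)
  show ?thesis
  proof (rule antisym)
    show "card (subfield_of k :: 'a set) \<le> k"
      unfolding subfield_of_def using \<open>k \<ge> 2\<close> by (rule card_fixed_points_power_le)
    have "(\<Union>c\<in>subfield_of k. {x :: 'a. T x = c}) = UNIV"
      using T_in by auto
    then have "k * k ^ (d - 1) = card (\<Union>c\<in>subfield_of k. {x :: 'a. T x = c})"
      using card \<open>d \<ge> 1\<close> by (simp flip: power_Suc)
    also have "\<dots> \<le> (\<Sum>c\<in>subfield_of k. card {x :: 'a. T x = c})"
      by (rule card_UN_le) simp
    also have "\<dots> \<le> (\<Sum>c \<in> (subfield_of k :: 'a set). k ^ (d - 1))"
      unfolding T_def by (rule sum_mono) (rule card_sum_power_powers_eq_le[OF \<open>k \<ge> 2\<close> \<open>d \<ge> 1\<close>])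
    also have "\<dots> = card (subfield_of k :: 'a set) * k ^ (d - 1)"
      by simp
    finally show "k \<le> card (subfield_of k :: 'a set)"
      using \<open>k \<ge> 2\<close> by simp
  qed
qed

lemma subfield_of_add:
  fixes x y :: "'a :: field"
  assumes "\<And>u v :: 'a. (u + v) ^ k = u ^ k + v ^ k"
    and "x \<in> subfield_of k" and "y \<in> subfield_of k"
  shows "x + y \<in> subfield_of k"
  using assms(1)[of x y] assms(2,3) by (simp add: subfield_of_def)

lemma subfield_of_mult:
  "x \<in> subfield_of k \<Longrightarrow> y \<in> subfield_of k \<Longrightarrow> x * (y :: 'a :: field) \<in> subfield_of k"
  by (simp add: subfield_of_def power_mult_distrib)

lemma subfield_of_divide:
  "x \<in> subfield_of k \<Longrightarrow> y \<in> subfield_of k \<Longrightarrow> x / (y :: 'a :: field) \<in> subfield_of k"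
  by (simp add: subfield_of_def power_divide)

lemma subfield_of_power:
  "x \<in> subfield_of k \<Longrightarrow> (x :: 'a :: field) ^ n \<in> subfield_of k"
  by (simp add: subfield_of_def flip: power_mult) (metis power_mult mult.commute)

lemma subfield_of_subset_power:
  "subfield_of k \<subseteq> (subfield_of (k ^ i) :: 'a :: field set)"
proof
  fix x :: 'a
  assume "x \<in> subfield_of k"
  then show "x \<in> subfield_of (k ^ i)"
    by (induction i) (simp_all add: subfield_of_def power_Suc2 power_mult)
qed

lemma card_PG1:
  "card (PG1 k :: 'a :: {field,finite} option set) = card (subfield_of k :: 'a set) + 1"
  unfolding PG1_def by (simp add: card_image)

section \<open>The projective line\<close>

type_synonym 'a quad = "'a \<times> 'a \<times> 'a \<times> 'a"

definition proj_point :: "'a :: field \<times> 'a \<Rightarrow> 'a option" where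
  "proj_point v = (if snd v = 0 then None else Some (fst v / snd v))"

fun proj_coords :: "'a :: zero_neq_one option \<Rightarrow> 'a \<times> 'a" where
  "proj_coords None = (1, 0)"
| "proj_coords (Some x) = (x, 1)"

definition vscale :: "'a :: times \<Rightarrow> 'a \<times> 'a \<Rightarrow> 'a \<times> 'a" where
  "vscale l v = (l * fst v, l * snd v)"

fun mat2_apply :: "'a :: comm_ring_1 quad \<Rightarrow> 'a \<times> 'a \<Rightarrow> 'a \<times> 'a" where
  "mat2_apply (a, b, c, d) (x, y) = (a * x + b * y, c * x + d * y)"

fun det2 :: "'a :: comm_ring_1 quad \<Rightarrow> 'a" where
  "det2 (a, b, c, d) = a * d - b * c"

fun adj2 :: "'a :: comm_ring_1 quad \<Rightarrow> 'a quad" where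
  "adj2 (a, b, c, d) = (d, - b, - c, a)"

lemma proj_point_vscale: "l \<noteq> 0 \<Longrightarrow> proj_point (vscale l v) = proj_point v"
  by (simp add: proj_point_def vscale_def)

lemma proj_point_proj_coords [simp]: "proj_point (proj_coords p) = p"
  by (cases p) (simp_all add: proj_point_def)

lemma proj_coords_neq_0 [simp]: "proj_coords p \<noteq> (0, 0)"
  by (cases p) simp_all

lemma proj_coords_proj_point:
  assumes "v \<noteq> (0, 0)"
  obtains l where "l \<noteq> 0" and "v = vscale l (proj_coords (proj_point v))"
proof (cases "snd v = 0")
  case True
  with assms show ?thesis
    by (intro that[of "fst v"]) (auto simp: proj_point_def vscale_def prod_eq_iff)
next
  case False
  then show ?thesis
    by (intro that[of "snd v"]) (simp_all add: proj_point_def vscale_def prod_eq_iff)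
qed

lemma mat2_apply_vscale: "mat2_apply g (vscale l v) = vscale l (mat2_apply g v)"
  by (cases g; cases v) (simp add: vscale_def algebra_simps)

lemma mat2_apply_adj2: "mat2_apply (adj2 g) (mat2_apply g v) = vscale (det2 g) v"
  by (cases g; cases v) (simp add: vscale_def algebra_simps)

lemma mat2_apply_adj2': "mat2_apply g (mat2_apply (adj2 g) v) = vscale (det2 g) v"
  by (cases g; cases v) (simp add: vscale_def algebra_simps)

lemma det2_adj2 [simp]: "det2 (adj2 g) = det2 g"
  by (cases g) (simp add: algebra_simps)

lemma adj2_adj2 [simp]: "adj2 (adj2 g) = g"
  by (cases g) simp

lemma mat2_apply_neq_0:
  assumes "det2 g \<noteq> (0 :: 'a :: field)" and "v \<noteq> (0, 0)"
  shows "mat2_apply g v \<noteq> (0, 0)"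
proof
  assume "mat2_apply g v = (0, 0)"
  have "vscale (det2 g) v = mat2_apply (adj2 g) (mat2_apply g v)"
    by (simp add: mat2_apply_adj2)
  also have "\<dots> = (0, 0)"
    using \<open>mat2_apply g v = (0, 0)\<close> by (cases "adj2 g") simp
  finally have "vscale (det2 g) v = (0, 0)" .
  with assms show False
    by (cases v) (simp add: vscale_def)
qed

lemma moebius_eq_proj_point: "moebius g p = proj_point (mat2_apply g (proj_coords p))"
  by (cases g; cases p) (simp_all add: proj_point_def)

lemma moebius_proj_point:
  assumes "v \<noteq> (0, 0)"
  shows "moebius g (proj_point v) = proj_point (mat2_apply g v)"
proof -
  obtain l where "l \<noteq> 0" and l: "v = vscale l (proj_coords (proj_point v))"
    using proj_coords_proj_point[OF assms] .
  have "proj_point (mat2_apply g v) =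
      proj_point (vscale l (mat2_apply g (proj_coords (proj_point v))))"
    by (subst l) (simp only: mat2_apply_vscale)
  with \<open>l \<noteq> 0\<close> show ?thesis
    by (simp add: proj_point_vscale moebius_eq_proj_point)
qed

lemma moebius_moebius_adj2:
  assumes "det2 g \<noteq> 0"
  shows "moebius g (moebius (adj2 g) p) = p"
proof -
  have "mat2_apply (adj2 g) (proj_coords p) \<noteq> (0, 0)"
    using assms by (intro mat2_apply_neq_0) simp_all
  then show ?thesis
    using assms by (simp add: moebius_proj_point mat2_apply_adj2' proj_point_vscale
        moebius_eq_proj_point[of "adj2 g"])
qed

lemma moebius_adj2_moebius:
  "det2 g \<noteq> 0 \<Longrightarrow> moebius (adj2 g) (moebius g p) = p"
  using moebius_moebius_adj2[of "adj2 g"] by simp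

lemma inj_moebius: "det2 g \<noteq> 0 \<Longrightarrow> inj (moebius g)"
  by (metis injI moebius_adj2_moebius)

definition cross2 :: "'a :: comm_ring_1 \<times> 'a \<Rightarrow> 'a \<times> 'a \<Rightarrow> 'a" where
  "cross2 v w = fst v * snd w - snd v * fst w"

lemma cross2_proj_coords_eq_0: "cross2 (proj_coords p) (proj_coords p') = 0 \<Longrightarrow> p = p'"
  by (cases p; cases p') (simp_all add: cross2_def)

lemma cramer2:
  fixes u v w :: "'a :: field \<times> 'a"
  assumes "cross2 u w \<noteq> 0"
  shows "mat2_apply (fst u, fst w, snd u, snd w)
    (cross2 v w / cross2 u w, cross2 u v / cross2 u w) = v"
proof -
  obtain a b c d e f where uvw: "u = (a, b)" "v = (c, d)" "w = (e, f)"
    by (metis prod.exhaust)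
  define D where "D = a * f - b * e"
  have "D \<noteq> 0"
    using assms by (simp add: uvw cross2_def D_def)
  then have solve: "s * (n1 / D) + t * (n2 / D) = r" if "s * n1 + t * n2 = r * D" for s t n1 n2 r
    using that by (simp add: times_divide_eq_right flip: add_divide_distrib)
  have "a * ((c * f - d * e) / D) + e * ((a * d - b * c) / D) = c"
    by (rule solve) (simp add: D_def algebra_simps)
  moreover have "b * ((c * f - d * e) / D) + f * ((a * d - b * c) / D) = d"
    by (rule solve) (simp add: D_def algebra_simps)
  ultimately show ?thesis
    by (simp add: uvw cross2_def flip: D_def)
qed

section \<open>Binary forms \<open>x\<^sup>4 (A x + B y) + y\<^sup>4 (C x + D y)\<close>\<close>

fun quintic :: "'a :: comm_ring_1 quad \<Rightarrow> 'a \<times> 'a \<Rightarrow> 'a" where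
  "quintic (A, B, C, D) (x, y) = A * x ^ 5 + B * x ^ 4 * y + C * x * y ^ 4 + D * y ^ 5"

text \<open>In characteristic 2 the Frobenius \<open>z \<mapsto> z\<^sup>4\<close> is additive, so substituting
  a linear map into a form of this shape gives a form of the same shape.\<close>

fun quintic_pullback :: "'a :: comm_ring_1 quad \<Rightarrow> 'a quad \<Rightarrow> 'a quad" where
  "quintic_pullback (A, B, C, D) (a, b, c, d) =
    (A * a ^ 5 + B * a ^ 4 * c + C * a * c ^ 4 + D * c ^ 5,
     A * a ^ 4 * b + B * a ^ 4 * d + C * b * c ^ 4 + D * c ^ 4 * d,
     A * a * b ^ 4 + B * b ^ 4 * c + C * a * d ^ 4 + D * c * d ^ 4,
     A * b ^ 5 + B * b ^ 4 * d + C * b * d ^ 4 + D * d ^ 5)"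

lemma power_4_add_CHAR_2:
  assumes "CHAR('a :: comm_semiring_1) = 2"
  shows "(x + y) ^ 4 = x ^ 4 + (y :: 'a) ^ 4"
proof -
  have "(x + y) ^ 4 = ((x + y) ^ 2) ^ 2"
    by (simp flip: power_mult)
  also have "\<dots> = (x ^ 2) ^ 2 + (y ^ 2) ^ 2"
    by (simp only: power_2_add_CHAR_2[OF assms])
  finally show ?thesis
    by (simp flip: power_mult)
qed

lemma quintic_pullback:
  assumes "CHAR('a :: comm_ring_1) = 2"
  shows "quintic (quintic_pullback F g) v = quintic F (mat2_apply g (v :: 'a \<times> 'a))"
proof -
  have fifth: "z ^ 5 = z ^ 4 * z" for z :: 'a
    by (simp add: numeral_eq_Suc)
  show ?thesis
    by (cases F; cases g; cases v)
      (simp only: quintic.simps quintic_pullback.simps mat2_apply.simps fifth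
        power_4_add_CHAR_2[OF assms] power_mult_distrib, simp add: algebra_simps)
qed

lemma quintic_vscale: "quintic F (vscale l v) = l ^ 5 * quintic F v"
  by (cases F; cases v) (simp add: vscale_def power_mult_distrib eval_nat_numeral algebra_simps)

lemma quintic_pullback_pullback_adj2:
  assumes "CHAR('a :: comm_ring_1) = 2"
  shows "quintic (quintic_pullback (quintic_pullback F (adj2 g)) g) v =
    det2 g ^ 5 * quintic F (v :: 'a \<times> 'a)"
  by (simp add: quintic_pullback[OF assms] mat2_apply_adj2 quintic_vscale)

lemma quintic_proj_point_eq_0:
  assumes "v \<noteq> (0, 0)"
  shows "quintic F (proj_coords (proj_point v)) = 0 \<longleftrightarrow> quintic F v = 0"
proof -
  obtain l where "l \<noteq> 0" and "v = vscale l (proj_coords (proj_point v))"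
    using proj_coords_proj_point[OF assms] .
  then have "quintic F v = l ^ 5 * quintic F (proj_coords (proj_point v))"
    by (metis quintic_vscale)
  with \<open>l \<noteq> 0\<close> show ?thesis
    by simp
qed

lemma quintic_moebius_eq_0:
  assumes "CHAR('a :: field) = 2" and "det2 g \<noteq> (0 :: 'a)"
  shows "quintic F (proj_coords (moebius g p)) = 0 \<longleftrightarrow>
    quintic (quintic_pullback F g) (proj_coords p) = 0"
  using assms
  by (simp add: moebius_eq_proj_point quintic_proj_point_eq_0 mat2_apply_neq_0 quintic_pullback)

definition quintic_zeros :: "'a :: field option set \<Rightarrow> 'a quad \<Rightarrow> 'a option set" where
  "quintic_zeros P F = {p \<in> P. quintic F (proj_coords p) = 0}"

lemma quintic_zeros_pullback_adj2:
  assumes "CHAR('a :: field) = 2" and "det2 g \<noteq> (0 :: 'a)"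
  shows "quintic_zeros P (quintic_pullback (quintic_pullback F (adj2 g)) g) = quintic_zeros P F"
  using assms by (simp add: quintic_zeros_def quintic_pullback_pullback_adj2)

lemma moebius_image_quintic_zeros:
  assumes "CHAR('a :: field) = 2" and "det2 g \<noteq> (0 :: 'a)" and "moebius g ` P = P"
  shows "moebius g ` quintic_zeros P (quintic_pullback F g) = quintic_zeros P F"
proof -
  have "moebius g ` {p \<in> P. quintic F (proj_coords (moebius g p)) = 0} =
      {p' \<in> moebius g ` P. quintic F (proj_coords p') = 0}"
    by blast
  with assms show ?thesis
    by (simp add: quintic_zeros_def quintic_moebius_eq_0)
qed

section \<open>\<open>GF(q)\<close> inside \<open>GF(q\<^sup>2)\<close>\<close>

locale GF_q_squared =
  fixes m :: nat and \<omega> :: "'a :: {field,finite}"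
  assumes card_UNIV: "card (UNIV :: 'a set) = 2 ^ (2 * m)"
    and even_m: "even m" and m_ge_4: "m \<ge> 4"
    and \<omega>_not_in_GFq: "\<omega> ^ 2 ^ m \<noteq> \<omega>"
begin

abbreviation q :: nat where "q \<equiv> 2 ^ m"

abbreviation GFq :: "'a set" where "GFq \<equiv> subfield_of q"

abbreviation GFq_forms :: "'a quad set" where "GFq_forms \<equiv> GFq \<times> GFq \<times> GFq \<times> GFq"

lemma CHAR_eq_2: "CHAR('a) = 2"
  using CHAR_eq_2_if_card_power_2[OF card_UNIV] m_ge_4 by simp

lemma add_self [simp]: "x + x = (0 :: 'a)"
  by (rule add_self_CHAR_2[OF CHAR_eq_2])

lemma uminus_eq_self [simp]: "- x = (x :: 'a)"
  by (rule uminus_CHAR_2[OF CHAR_eq_2])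

lemma diff_eq_add [simp]: "x - y = x + (y :: 'a)"
  by (rule minus_CHAR_2[OF CHAR_eq_2])

lemma add_eq_0_iff_eq: "x + y = 0 \<longleftrightarrow> x = (y :: 'a)"
  by (metis add.assoc add.right_neutral add_self)

lemma q_ge_16: "q \<ge> 16"
  using power_increasing[OF m_ge_4, of "2 :: nat"] by simp

lemma frobenius_add: "(x + y) ^ q = x ^ q + (y :: 'a) ^ q"
proof -
  have "prime CHAR('a)"
    unfolding CHAR_eq_2 by (rule two_is_prime_nat)
  moreover have "q = CHAR('a) ^ m"
    unfolding CHAR_eq_2 ..
  ultimately show ?thesis
    by (rule freshmans_dream')
qed

lemma frobenius_frobenius [simp]: "(x ^ q) ^ q = (x :: 'a)"
proof -
  have "q * q = card (UNIV :: 'a set)"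
    using card_UNIV by (simp flip: power_add add: mult_2)
  then show ?thesis
    by (metis power_mult power_card_eq_same)
qed

lemma frobenius_power: "(x ^ n) ^ q = ((x :: 'a) ^ q) ^ n"
  by (metis power_mult mult.commute)

lemma in_GFq_iff: "x \<in> GFq \<longleftrightarrow> x ^ q = x"
  by (simp add: subfield_of_def)

lemma GFq_add [intro]: "x \<in> GFq \<Longrightarrow> y \<in> GFq \<Longrightarrow> x + y \<in> GFq"
  by (rule subfield_of_add[OF frobenius_add])

lemmas GFq_mult [intro] = subfield_of_mult[of _ q]
  and GFq_divide [intro] = subfield_of_divide[of _ q]
  and GFq_power [intro] = subfield_of_power[of _ q]

lemma zero_in_GFq [simp, intro]: "0 \<in> GFq" and one_in_GFq [simp, intro]: "1 \<in> GFq"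
  by (simp_all add: in_GFq_iff)

lemma card_GFq: "card GFq = q"
  by (rule card_subfield_of[of q 2 m])
    (use m_ge_4 in \<open>simp_all add: card_UNIV CHAR_eq_2 flip: power_mult\<close>)

lemma card_PG1_q: "card (PG1 q :: 'a option set) = q + 1"
  by (simp add: card_PG1 card_GFq)

lemma card_PG1_4: "card (PG1 4 :: 'a option set) = 5"
proof -
  have "card (subfield_of 4 :: 'a set) = 4"
    by (rule card_subfield_of[of 4 m 2])
      (use m_ge_4 in \<open>simp_all add: card_UNIV CHAR_eq_2 power_mult\<close>)
  then show ?thesis
    by (simp add: card_PG1)
qed

lemma PG1_4_subset_PG1_q: "PG1 4 \<subseteq> (PG1 q :: 'a option set)"
proof -
  have "q = 4 ^ (m div 2)"
    using even_m by (metis dvd_mult_div_cancel power_mult power2_eq_square numeral_Bit0 mult_2)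
  then have "subfield_of 4 \<subseteq> GFq"
    using subfield_of_subset_power by metis
  then show ?thesis
    by (auto simp: PG1_def)
qed

section \<open>Witt blocks as zero sets of forms\<close>

lemma det2_pgl2: "g \<in> pgl2 q \<Longrightarrow> det2 (g :: 'a quad) \<noteq> 0"
  by (cases g) (simp add: pgl2_def)

lemma adj2_pgl2: "g \<in> pgl2 q \<Longrightarrow> adj2 (g :: 'a quad) \<in> pgl2 q"
  by (cases g) (auto simp: pgl2_def mult.commute)

lemma proj_coords_PG1: "p \<in> PG1 q \<Longrightarrow> proj_coords (p :: 'a option) \<in> GFq \<times> GFq"
  by (cases p) (auto simp: PG1_def)

lemma moebius_PG1: "g \<in> pgl2 q \<Longrightarrow> p \<in> PG1 q \<Longrightarrow> moebius (g :: 'a quad) p \<in> PG1 q"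
  by (cases g; cases p) (auto simp: pgl2_def PG1_def intro!: imageI)

lemma moebius_image_PG1:
  fixes g :: "'a quad"
  assumes "g \<in> pgl2 q"
  shows "moebius g ` PG1 q = PG1 q"
proof
  show "moebius g ` PG1 q \<subseteq> PG1 q"
    using moebius_PG1[OF assms] by blast
  show "PG1 q \<subseteq> moebius g ` PG1 q"
  proof
    fix p :: "'a option"
    assume "p \<in> PG1 q"
    then have "moebius (adj2 g) p \<in> PG1 q"
      using moebius_PG1 adj2_pgl2 assms by blast
    moreover have "p = moebius g (moebius (adj2 g) p)"
      using moebius_moebius_adj2 det2_pgl2 assms by metis
    ultimately show "p \<in> moebius g ` PG1 q"
      by blast
  qed
qed

lemma pgl2_three_transitive:
  fixes p1 p2 p3 :: "'a option"
  assumes "p1 \<in> PG1 q" "p2 \<in> PG1 q" "p3 \<in> PG1 q" and "p1 \<noteq> p2" "p1 \<noteq> p3" "p2 \<noteq> p3"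
  obtains g where "g \<in> pgl2 q" and "moebius g None = p3"
    and "moebius g (Some 0) = p1" and "moebius g (Some 1) = p2"
proof -
  define v1 v2 v3 where "v1 = proj_coords p1" and "v2 = proj_coords p2" and "v3 = proj_coords p3"
  define D where "D = cross2 v3 v1"
  define \<alpha> where "\<alpha> = cross2 v2 v1 / D"
  define \<beta> where "\<beta> = cross2 v3 v2 / D"
  \<comment> \<open>By Cramer's rule \<open>v2 = \<alpha> v3 + \<beta> v1\<close>; the columns of \<open>g\<close> are \<open>\<alpha> v3\<close> and \<open>\<beta> v1\<close>.\<close>
  define g where "g = (\<alpha> * fst v3, \<beta> * fst v1, \<alpha> * snd v3, \<beta> * snd v1)"
  have "D \<noteq> 0" and "\<alpha> \<noteq> 0" and "\<beta> \<noteq> 0"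
    using assms(4-6) cross2_proj_coords_eq_0
    unfolding D_def \<alpha>_def \<beta>_def v1_def v2_def v3_def by auto
  have coords: "fst v1 \<in> GFq" "snd v1 \<in> GFq" "fst v2 \<in> GFq" "snd v2 \<in> GFq"
    "fst v3 \<in> GFq" "snd v3 \<in> GFq"
    using proj_coords_PG1[OF assms(1)] proj_coords_PG1[OF assms(2)] proj_coords_PG1[OF assms(3)]
    unfolding v1_def v2_def v3_def by (simp_all add: mem_Times_iff)
  then have "\<alpha> \<in> GFq" and "\<beta> \<in> GFq"
    unfolding \<alpha>_def \<beta>_def D_def cross2_def by (auto intro!: GFq_divide GFq_add GFq_mult)
  moreover have "det2 g = \<alpha> * \<beta> * D"
    by (simp add: g_def D_def cross2_def algebra_simps)
  ultimately have "g \<in> pgl2 q"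
    using coords \<open>D \<noteq> 0\<close> \<open>\<alpha> \<noteq> 0\<close> \<open>\<beta> \<noteq> 0\<close>
    by (auto simp: pgl2_def g_def intro!: GFq_mult)
  moreover have "moebius g None = p3"
    using \<open>\<alpha> \<noteq> 0\<close>
    by (simp add: moebius_eq_proj_point g_def proj_point_vscale flip: vscale_def[of \<alpha> v3])
      (simp add: v3_def)
  moreover have "moebius g (Some 0) = p1"
    using \<open>\<beta> \<noteq> 0\<close>
    by (simp add: moebius_eq_proj_point g_def proj_point_vscale flip: vscale_def[of \<beta> v1])
      (simp add: v1_def)
  moreover have "mat2_apply g (1, 1) = v2"
    using cramer2[of v3 v1 v2] \<open>D \<noteq> 0\<close> by (simp add: g_def \<alpha>_def \<beta>_def D_def mult.commute)
  then have "moebius g (Some 1) = p2"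
    by (simp add: moebius_eq_proj_point v2_def)
  ultimately show ?thesis
    using that by blast
qed

lemma quintic_pullback_GFq:
  "F \<in> GFq_forms \<Longrightarrow> g \<in> pgl2 q \<Longrightarrow> quintic_pullback F (g :: 'a quad) \<in> GFq_forms"
  by (cases F; cases g) (auto simp: pgl2_def intro!: GFq_add GFq_mult GFq_power)

lemma quintic_zeros_PG1_4: "quintic_zeros (PG1 q) (0, 1, 1, 0) = (PG1 4 :: 'a option set)"
proof -
  have "quintic (0, 1, 1, 0) (proj_coords p) = 0 \<longleftrightarrow> p \<in> PG1 4" for p :: "'a option"
    by (cases p) (simp_all add: PG1_def subfield_of_def add_eq_0_iff_eq image_iff)
  then show ?thesis
    using PG1_4_subset_PG1_q by (auto simp: quintic_zeros_def)
qed

definition quintic_blocks :: "'a option set set" where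
  "quintic_blocks = {quintic_zeros (PG1 q) F | F.
      F \<in> GFq_forms \<and> card (quintic_zeros (PG1 q) F) = 5}"

lemma witt_blocks_subset_quintic_blocks: "witt_blocks q \<subseteq> quintic_blocks"
proof
  fix Z :: "'a option set"
  assume "Z \<in> witt_blocks q"
  then obtain g where g: "g \<in> pgl2 q" and Z: "Z = moebius g ` PG1 4"
    by (auto simp: witt_blocks_def)
  note det = det2_pgl2[OF g]
  define F where "F = quintic_pullback (0, 1, 1, 0) (adj2 g)"
  have F: "F \<in> GFq_forms"
    unfolding F_def using adj2_pgl2[OF g] by (intro quintic_pullback_GFq) simp_all
  have "Z = moebius g ` quintic_zeros (PG1 q) (quintic_pullback F g)"
    unfolding Z F_def quintic_zeros_pullback_adj2[OF CHAR_eq_2 det] quintic_zeros_PG1_4 ..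
  also have "\<dots> = quintic_zeros (PG1 q) F"
    by (rule moebius_image_quintic_zeros[OF CHAR_eq_2 det moebius_image_PG1[OF g]])
  finally have "Z = quintic_zeros (PG1 q) F" .
  moreover have "card Z = 5"
    unfolding Z using inj_moebius[OF det] card_PG1_4 by (simp add: card_image inj_on_subset)
  ultimately show "Z \<in> quintic_blocks"
    using F by (auto simp: quintic_blocks_def)
qed

lemma quintic_zeros_vanishing_at_inf_0_1:
  assumes "quintic F (proj_coords None) = 0" and "quintic F (proj_coords (Some 0)) = 0"
    and "quintic F (proj_coords (Some 1)) = (0 :: 'a)"
  shows "quintic_zeros (PG1 q) F = PG1 q \<or> quintic_zeros (PG1 q) F = PG1 4"
proof -
  obtain A B C D where F: "F = (A, B, C, D)"
    by (metis prod.exhaust)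
  with assms have "A = 0" and "D = 0" and "C = B"
    by (simp_all add: add_eq_0_iff_eq)
  then have "quintic F v = B * quintic (0, 1, 1, 0) v" for v
    by (cases v) (simp add: F algebra_simps)
  then show ?thesis
    by (cases "B = 0") (simp_all add: quintic_zeros_def flip: quintic_zeros_PG1_4)
qed

lemma quintic_blocks_subset_witt_blocks: "quintic_blocks \<subseteq> witt_blocks q"
proof
  fix Z :: "'a option set"
  assume "Z \<in> quintic_blocks"
  then obtain F where Z: "Z = quintic_zeros (PG1 q) F" and "card Z = 5"
    by (auto simp: quintic_blocks_def)
  obtain T where "T \<subseteq> Z" and "card T = 3"
    using obtain_subset_with_card_n[of 3 Z] \<open>card Z = 5\<close> by auto
  then obtain p1 p2 p3 where "{p1, p2, p3} \<subseteq> Z" and "p1 \<noteq> p2" "p1 \<noteq> p3" "p2 \<noteq> p3"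
    by (auto simp: card_3_iff)
  moreover have "Z \<subseteq> PG1 q"
    by (simp add: Z quintic_zeros_def)
  ultimately have "p1 \<in> PG1 q" "p2 \<in> PG1 q" "p3 \<in> PG1 q"
    by auto
  then obtain g where g: "g \<in> pgl2 q" and "moebius g None = p3"
    and "moebius g (Some 0) = p1" and "moebius g (Some 1) = p2"
    using pgl2_three_transitive \<open>p1 \<noteq> p2\<close> \<open>p1 \<noteq> p3\<close> \<open>p2 \<noteq> p3\<close> by blast
  note det = det2_pgl2[OF g]
  define G where "G = quintic_pullback F g"
  have Z_image: "Z = moebius g ` quintic_zeros (PG1 q) G"
    unfolding Z G_def
    by (rule moebius_image_quintic_zeros[OF CHAR_eq_2 det moebius_image_PG1[OF g], symmetric])
  have vanish: "quintic G (proj_coords p) = 0" if "moebius g p \<in> Z" for p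
    using that quintic_moebius_eq_0[OF CHAR_eq_2 det, of F p] by (simp add: Z G_def quintic_zeros_def)
  have "quintic_zeros (PG1 q) G = PG1 q \<or> quintic_zeros (PG1 q) G = PG1 4"
    using \<open>{p1, p2, p3} \<subseteq> Z\<close> \<open>moebius g None = p3\<close> \<open>moebius g (Some 0) = p1\<close>
      \<open>moebius g (Some 1) = p2\<close>
    by (intro quintic_zeros_vanishing_at_inf_0_1 vanish) auto
  moreover have "Z \<noteq> PG1 q"
    using \<open>card Z = 5\<close> card_PG1_q q_ge_16 by auto
  ultimately have "Z = moebius g ` PG1 4"
    using Z_image moebius_image_PG1[OF g] by auto
  then show "Z \<in> witt_blocks q"
    using g unfolding witt_blocks_def by blast
qed

lemma witt_blocks_eq_quintic_blocks: "witt_blocks q = quintic_blocks"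
  using witt_blocks_subset_quintic_blocks quintic_blocks_subset_witt_blocks by blast

section \<open>The Cayley map and the trace code\<close>

abbreviation U :: "'a set" where "U \<equiv> Uroots q"

lemma Uroots_nonzero: "u \<in> U \<Longrightarrow> u \<noteq> 0"
  by (auto simp: Uroots_def)

lemma Uroots_frobenius: "u \<in> U \<Longrightarrow> u ^ q = inverse u"
  by (simp add: Uroots_def inverse_unique power_Suc2)

lemma \<omega>_add_frobenius_neq_0: "\<omega> ^ q + \<omega> \<noteq> 0"
  using \<omega>_not_in_GFq by (simp add: add_eq_0_iff_eq)

definition cayley_mat :: "'a quad" where
  "cayley_mat = (\<omega> ^ q, \<omega>, 1, 1)"

definition cayley :: "'a \<Rightarrow> 'a option" where
  "cayley u = moebius cayley_mat (Some u)"

lemma det2_cayley_mat: "det2 cayley_mat \<noteq> 0"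
  using \<omega>_add_frobenius_neq_0 by (simp add: cayley_mat_def)

lemma cayley_in_PG1:
  assumes "u \<in> U"
  shows "cayley u \<in> PG1 q"
proof (cases "u = 1")
  case True
  then show ?thesis
    by (simp add: cayley_def cayley_mat_def PG1_def)
next
  case False
  then have "u + 1 \<noteq> 0" and "u \<noteq> 0"
    using Uroots_nonzero[OF assms] by (simp_all add: add_eq_0_iff_eq)
  have "((\<omega> ^ q * u + \<omega>) / (u + 1)) ^ q = (\<omega> * inverse u + \<omega> ^ q) / (inverse u + 1)"
    using assms by (simp add: power_divide frobenius_add power_mult_distrib Uroots_frobenius)
  also have "\<dots> = (\<omega> ^ q * u + \<omega>) / (u + 1)"
  proof -
    have "\<omega> * inverse u + \<omega> ^ q = (\<omega> ^ q * u + \<omega>) / u" and "inverse u + 1 = (u + 1) / u"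
      using \<open>u \<noteq> 0\<close> by (simp_all add: field_simps)
    then show ?thesis
      using \<open>u \<noteq> 0\<close> by simp
  qed
  finally show ?thesis
    using \<open>u + 1 \<noteq> 0\<close> by (simp add: cayley_def cayley_mat_def PG1_def in_GFq_iff)
qed

lemma moebius_adj2_cayley_mat_in_Uroots:
  assumes "p \<in> PG1 q"
  obtains u where "u \<in> U" and "moebius (adj2 cayley_mat) p = Some u"
proof (cases p)
  case None
  then show ?thesis
    using that by (simp add: cayley_mat_def Uroots_def)
next
  case (Some x)
  then have x: "x ^ q = x"
    using assms by (auto simp: PG1_def in_GFq_iff)
  have "x + \<omega> \<noteq> 0" and "x + \<omega> ^ q \<noteq> 0"
    using x \<omega>_not_in_GFq by (auto simp: add_eq_0_iff_eq)
  define u where "u = (x + \<omega>) / (x + \<omega> ^ q)"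
  have "u ^ q = (x + \<omega> ^ q) / (x + \<omega>)"
    by (simp add: u_def power_divide frobenius_add x)
  then have "u \<in> U"
    using \<open>x + \<omega> \<noteq> 0\<close> \<open>x + \<omega> ^ q \<noteq> 0\<close> by (simp add: Uroots_def power_Suc2 u_def)
  moreover have "moebius (adj2 cayley_mat) p = Some u"
    using Some \<open>x + \<omega> ^ q \<noteq> 0\<close> by (simp add: cayley_mat_def u_def add.commute)
  ultimately show ?thesis
    using that by blast
qed

lemma bij_betw_cayley: "bij_betw cayley U (PG1 q)"
proof (rule bij_betw_imageI)
  show "inj_on cayley U"
    using inj_moebius[OF det2_cayley_mat] by (auto simp: cayley_def inj_on_def inj_def)
  show "cayley ` U = PG1 q"
  proof
    show "cayley ` U \<subseteq> PG1 q"
      using cayley_in_PG1 by blast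
    show "PG1 q \<subseteq> cayley ` U"
    proof
      fix p :: "'a option"
      assume "p \<in> PG1 q"
      then obtain u where "u \<in> U" and "moebius (adj2 cayley_mat) p = Some u"
        by (rule moebius_adj2_cayley_mat_in_Uroots)
      then have "p = cayley u"
        using moebius_moebius_adj2[OF det2_cayley_mat, of p] by (simp add: cayley_def)
      with \<open>u \<in> U\<close> show "p \<in> cayley ` U"
        by blast
    qed
  qed
qed

lemma card_Uroots: "card U = q + 1"
  using bij_betw_same_card[OF bij_betw_cayley] card_PG1_q by simp

lemma cayley_image_zeros:
  "cayley ` {u \<in> U. quintic (quintic_pullback F cayley_mat) (u, 1) = 0} = quintic_zeros (PG1 q) F"
proof -
  have "quintic F (proj_coords (cayley u)) = 0 \<longleftrightarrow> quintic (quintic_pullback F cayley_mat) (u, 1) = 0"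
    for u
    using quintic_moebius_eq_0[OF CHAR_eq_2 det2_cayley_mat, of F "Some u"] by (simp add: cayley_def)
  moreover have "cayley ` U = PG1 q"
    using bij_betw_cayley by (rule bij_betw_imp_surj_on)
  moreover have "{p \<in> cayley ` U. P p} = cayley ` {u \<in> U. P (cayley u)}" for P
    by blast
  ultimately show ?thesis
    unfolding quintic_zeros_def by simp
qed

definition conj_sym_quintic :: "'a \<Rightarrow> 'a \<Rightarrow> 'a quad" where
  "conj_sym_quintic b g = (g, b, b ^ q, g ^ q)"

lemma quintic_pullback_cayley_mat_GFq:
  assumes "F \<in> GFq_forms"
  obtains b g where "quintic_pullback F cayley_mat = conj_sym_quintic b g"
proof -
  obtain A B C D where F: "F = (A, B, C, D)" and "A ^ q = A" "B ^ q = B" "C ^ q = C" "D ^ q = D"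
    using assms by (cases F) (auto simp: in_GFq_iff)
  then show ?thesis
    using that[of "A * (\<omega> ^ q) ^ 4 * \<omega> + B * (\<omega> ^ q) ^ 4 + C * \<omega> + D"
        "A * (\<omega> ^ q) ^ 5 + B * (\<omega> ^ q) ^ 4 + C * \<omega> ^ q + D"]
    by (simp add: conj_sym_quintic_def cayley_mat_def frobenius_add power_mult_distrib
        frobenius_power[of _ 4] frobenius_power[of _ 5] ac_simps)
qed

lemma quintic_pullback_adj2_cayley_mat_GFq:
  "quintic_pullback (conj_sym_quintic b g) (adj2 cayley_mat) \<in> GFq_forms"
  by (simp add: conj_sym_quintic_def cayley_mat_def in_GFq_iff frobenius_add power_mult_distrib
      frobenius_power[of _ 4] frobenius_power[of _ 5] ac_simps)

definition Uroots_zeros :: "'a \<Rightarrow> 'a \<Rightarrow> 'a set" where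
  "Uroots_zeros b g = {u \<in> U. quintic (conj_sym_quintic b g) (u, 1) = 0}"

lemma card_cayley_image: "Z \<subseteq> U \<Longrightarrow> card (cayley ` Z) = card Z"
  using bij_betw_imp_inj_on[OF bij_betw_cayley] by (metis card_image inj_on_subset)

lemma quintic_zeros_eq_cayley_image_Uroots_zeros:
  "quintic_pullback F cayley_mat = conj_sym_quintic b g \<Longrightarrow>
    quintic_zeros (PG1 q) F = cayley ` Uroots_zeros b g"
  using cayley_image_zeros[of F] by (simp add: Uroots_zeros_def)

lemma cayley_image_Uroots_zeros:
  "cayley ` Uroots_zeros b g =
    quintic_zeros (PG1 q) (quintic_pullback (conj_sym_quintic b g) (adj2 cayley_mat))"
proof -
  have "{u \<in> U. quintic (quintic_pullback (quintic_pullback (conj_sym_quintic b g) (adj2 cayley_mat))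
      cayley_mat) (u, 1) = 0} = Uroots_zeros b g"
    using det2_cayley_mat by (simp add: Uroots_zeros_def quintic_pullback_pullback_adj2[OF CHAR_eq_2])
  then show ?thesis
    using cayley_image_zeros by metis
qed

lemma cayley_image_Uroots_zeros_blocks:
  "(\<lambda>Z. cayley ` Z) ` {Uroots_zeros b g | b g. card (Uroots_zeros b g) = 5} = quintic_blocks"
proof
  have "Uroots_zeros b g \<subseteq> U" for b g
    by (auto simp: Uroots_zeros_def)
  note card_image = card_cayley_image[OF this]
  show "(\<lambda>Z. cayley ` Z) ` {Uroots_zeros b g | b g. card (Uroots_zeros b g) = 5} \<subseteq> quintic_blocks"
  proof clarify
    fix b g
    assume "card (Uroots_zeros b g) = 5"
    then have
      "card (quintic_zeros (PG1 q) (quintic_pullback (conj_sym_quintic b g) (adj2 cayley_mat))) = 5"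
      using card_image[of b g] by (simp add: cayley_image_Uroots_zeros)
    with quintic_pullback_adj2_cayley_mat_GFq show "cayley ` Uroots_zeros b g \<in> quintic_blocks"
      unfolding quintic_blocks_def cayley_image_Uroots_zeros by blast
  qed
  show "quintic_blocks \<subseteq> (\<lambda>Z. cayley ` Z) ` {Uroots_zeros b g | b g. card (Uroots_zeros b g) = 5}"
  proof
    fix Y
    assume "Y \<in> quintic_blocks"
    then obtain F where F: "F \<in> GFq_forms" and Y: "Y = quintic_zeros (PG1 q) F"
      and "card Y = 5"
      by (auto simp: quintic_blocks_def)
    obtain b g where "quintic_pullback F cayley_mat = conj_sym_quintic b g"
      using quintic_pullback_cayley_mat_GFq[OF F] .
    then have "Y = cayley ` Uroots_zeros b g"
      unfolding Y by (rule quintic_zeros_eq_cayley_image_Uroots_zeros)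
    then show "Y \<in> (\<lambda>Z. cayley ` Z) ` {Uroots_zeros b g | b g. card (Uroots_zeros b g) = 5}"
      using \<open>card Y = 5\<close> card_image by auto
  qed
qed

lemma Uroots_power_eq_inverse:
  assumes "u \<in> U" and "n \<le> q + 1"
  shows "u ^ (q + 1 - n) = inverse u ^ n"
proof -
  have "u ^ n * u ^ (q + 1 - n) = 1"
    using assms by (simp add: Uroots_def flip: power_add)
  then have "inverse (u ^ n) = u ^ (q + 1 - n)"
    by (rule inverse_unique)
  then show ?thesis
    by (simp add: power_inverse)
qed

lemma codeword_eq_square:
  assumes u: "u \<in> U" and b: "b ^ 2 = a3 + aq2 ^ q" and g: "g ^ 2 = a5 + aq4 ^ q"
  shows "u ^ 5 * trace q (a3 * u ^ 3 + aq2 * u ^ (q - 2) + a5 * u ^ 5 + aq4 * u ^ (q - 4))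
    = quintic (conj_sym_quintic b g) (u, 1) ^ 2"
proof -
  define v where "v = inverse u"
  have "u \<noteq> 0"
    using Uroots_nonzero[OF u] .
  have "u ^ (q - 2) = v ^ 3" and "u ^ (q - 4) = v ^ 5"
    using Uroots_power_eq_inverse[OF u, of 3] Uroots_power_eq_inverse[OF u, of 5] q_ge_16
    by (simp_all add: v_def numeral_eq_Suc)
  moreover have "u ^ q = v" and "v ^ q = u"
    using Uroots_frobenius[OF u] by (simp_all add: v_def power_inverse)
  ultimately have "trace q (a3 * u ^ 3 + aq2 * u ^ (q - 2) + a5 * u ^ 5 + aq4 * u ^ (q - 4))
      = (a3 + aq2 ^ q) * u ^ 3 + (a3 ^ q + aq2) * v ^ 3
        + (a5 + aq4 ^ q) * u ^ 5 + (a5 ^ q + aq4) * v ^ 5"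
    by (simp add: trace_def frobenius_add power_mult_distrib frobenius_power[of u] frobenius_power[of v]
        algebra_simps)
  also have "a3 ^ q + aq2 = (b ^ q) ^ 2"
    using b by (simp add: frobenius_add flip: frobenius_power[of b 2])
  also have "a5 ^ q + aq4 = (g ^ q) ^ 2"
    using g by (simp add: frobenius_add flip: frobenius_power[of g 2])
  finally have "u ^ 5 * trace q (a3 * u ^ 3 + aq2 * u ^ (q - 2) + a5 * u ^ 5 + aq4 * u ^ (q - 4))
      = u ^ 5 * (b ^ 2 * u ^ 3 + (b ^ q) ^ 2 * v ^ 3 + g ^ 2 * u ^ 5 + (g ^ q) ^ 2 * v ^ 5)"
    by (simp only: b g)
  also have "\<dots> = b ^ 2 * u ^ 8 + (b ^ q) ^ 2 * u ^ 2 + g ^ 2 * u ^ 10 + (g ^ q) ^ 2"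
    using \<open>u \<noteq> 0\<close> by (simp add: v_def field_simps eval_nat_numeral)
  also have "\<dots> = quintic (conj_sym_quintic b g) (u, 1) ^ 2"
    by (simp add: conj_sym_quintic_def power_2_add_CHAR_2[OF CHAR_eq_2] power_mult_distrib
        algebra_simps flip: power_mult)
  finally show ?thesis .
qed

lemma codeword_eq_0_iff:
  assumes "u \<in> U" and "b ^ 2 = a3 + aq2 ^ q" and "g ^ 2 = a5 + aq4 ^ q"
  shows "trace q (a3 * u ^ 3 + aq2 * u ^ (q - 2) + a5 * u ^ 5 + aq4 * u ^ (q - 4)) = 0
    \<longleftrightarrow> quintic (conj_sym_quintic b g) (u, 1) = 0"
  using codeword_eq_square[OF assms] Uroots_nonzero[OF assms(1)]
  by (metis mult_eq_0_iff power_not_zero zero_power2)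

lemma codeword_zero_set:
  assumes "c \<in> trace_code35 q"
  obtains b g where "{u \<in> U. c u = 0} = Uroots_zeros b g"
proof -
  obtain a3 aq2 a5 aq4
    where c: "c = (\<lambda>u. trace q (a3 * u ^ 3 + aq2 * u ^ (q - 2) + a5 * u ^ 5 + aq4 * u ^ (q - 4)))"
    using assms by (auto simp: trace_code35_def)
  obtain b g where "b ^ 2 = a3 + aq2 ^ q" and "g ^ 2 = a5 + aq4 ^ q"
    using exists_square_root_CHAR_2[OF CHAR_eq_2] by metis
  then have "{u \<in> U. c u = 0} = Uroots_zeros b g"
    using codeword_eq_0_iff by (auto simp: c Uroots_zeros_def)
  then show ?thesis
    by (rule that)
qed

lemma Uroots_zeros_codeword:
  obtains c where "c \<in> trace_code35 q" and "{u \<in> U. c u = 0} = Uroots_zeros b g"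
proof -
  define c
    where "c = (\<lambda>u. trace q (b ^ 2 * u ^ 3 + 0 * u ^ (q - 2) + g ^ 2 * u ^ 5 + 0 * u ^ (q - 4)))"
  have "c \<in> trace_code35 q"
    unfolding c_def trace_code35_def by blast
  moreover have "b ^ 2 = b ^ 2 + 0 ^ q" and "g ^ 2 = g ^ 2 + 0 ^ q"
    by simp_all
  then have "{u \<in> U. c u = 0} = Uroots_zeros b g"
    unfolding c_def Uroots_zeros_def using codeword_eq_0_iff by blast
  ultimately show ?thesis
    by (rule that)
qed

lemma card_supp_on_Uroots:
  "card (supp_on U c) = q - 4 \<longleftrightarrow> card {u \<in> U. c u = 0} = 5"
proof -
  have "{u \<in> U. c u = 0} = U - supp_on U c" and "supp_on U c \<subseteq> U"
    by (auto simp: supp_on_def)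
  then have "card {u \<in> U. c u = 0} = q + 1 - card (supp_on U c)"
    by (simp add: card_Diff_subset finite_subset card_Uroots)
  then show ?thesis
    using q_ge_16 by linarith
qed

lemma complements_of_blocks_w:
  "{U - B | B. B \<in> blocks_w q (q - 4)} = {Uroots_zeros b g | b g. card (Uroots_zeros b g) = 5}"
proof -
  have complement: "U - supp_on U c = {u \<in> U. c u = 0}" for c
    by (auto simp: supp_on_def)
  show ?thesis
  proof
    show "{U - B | B. B \<in> blocks_w q (q - 4)} \<subseteq> {Uroots_zeros b g | b g. card (Uroots_zeros b g) = 5}"
    proof clarify
      fix B :: "'a set"
      assume "B \<in> blocks_w q (q - 4)"
      then obtain c where c: "c \<in> trace_code35 q" and B: "B = supp_on U c"
        and "card {u \<in> U. c u = 0} = 5"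
        by (auto simp: blocks_w_def card_supp_on_Uroots)
      obtain b g where "{u \<in> U. c u = 0} = Uroots_zeros b g"
        using codeword_zero_set[OF c] .
      then show "\<exists>b g. U - B = Uroots_zeros b g \<and> card (Uroots_zeros b g) = 5"
        using \<open>card {u \<in> U. c u = 0} = 5\<close> by (auto simp: B complement)
    qed
    show "{Uroots_zeros b g | b g. card (Uroots_zeros b g) = 5} \<subseteq> {U - B | B. B \<in> blocks_w q (q - 4)}"
    proof clarify
      fix b g
      assume "card (Uroots_zeros b g) = 5"
      obtain c where c: "c \<in> trace_code35 q" and zeros: "{u \<in> U. c u = 0} = Uroots_zeros b g"
        by (rule Uroots_zeros_codeword)
      then have "supp_on U c \<in> blocks_w q (q - 4)"
        using \<open>card (Uroots_zeros b g) = 5\<close> by (auto simp: blocks_w_def card_supp_on_Uroots)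
      moreover have "Uroots_zeros b g = U - supp_on U c"
        by (simp add: complement zeros)
      ultimately show "\<exists>B. Uroots_zeros b g = U - B \<and> B \<in> blocks_w q (q - 4)"
        by blast
    qed
  qed
qed

lemma inc_isomorphic_trace_code_witt:
  "inc_isomorphic U {U - B | B. B \<in> blocks_w q (q - 4)} (PG1 q :: 'a option set) (witt_blocks q)"
proof -
  have blocks: "(\<lambda>Z. cayley ` Z) ` {U - B | B. B \<in> blocks_w q (q - 4)} = witt_blocks q"
    by (simp only: complements_of_blocks_w cayley_image_Uroots_zeros_blocks witt_blocks_eq_quintic_blocks)
  show ?thesis
    unfolding inc_isomorphic_def by (rule exI[of _ cayley]) (rule conjI[OF bij_betw_cayley blocks])
qed

end

theorem theorem26:
  fixes m :: nat
  assumes "card (UNIV :: 'a::{field,finite} set) = 2 ^ (2 * m)"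
    and "even m" and "m \<ge> 4"
  shows "inc_isomorphic (Uroots (2 ^ m) :: 'a set)
           {Uroots (2 ^ m) - B | B. B \<in> blocks_w (2 ^ m) (2 ^ m - 4)}
           (PG1 (2 ^ m) :: 'a option set) (witt_blocks (2 ^ m))"
proof -
  have "CHAR('a) = 2"
    using CHAR_eq_2_if_card_power_2[OF assms(1)] assms(3) by simp
  have "card (subfield_of (2 ^ m) :: 'a set) = 2 ^ m"
    by (rule card_subfield_of[of _ 2 m]) (use assms \<open>CHAR('a) = 2\<close> in \<open>simp_all flip: power_mult\<close>)
  moreover have "(2 :: nat) ^ m < 2 ^ (2 * m)"
    using assms(3) by simp
  ultimately have "subfield_of (2 ^ m) \<noteq> (UNIV :: 'a set)"
    using assms(1) by auto
  then obtain \<omega> :: 'a where "\<omega> \<notin> subfield_of (2 ^ m)"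
    by blast
  then interpret GF_q_squared m \<omega>
    using assms by unfold_locales (simp_all add: subfield_of_def)
  show ?thesis
    by (rule inc_isomorphic_trace_code_witt)
qed

end
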